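(* Let $r\ge 3$, $t\ge 2$, and let $G$ be a connected simple $(r+1)$-regular graph with $N$ vertices and girth at least $t+1$. Let $\mathcal{C}$ be the binary code whose parity-check matrix is the vertex–edge incidence matrix of $G$ over $\mathbb{F}_2$ (an $(n,k,r,t)_{\mathrm{seq}}$ code with $n=N(r+1)/2$). Then $\mathcal{C}$ attains equality in the rate bound, i.e. $\frac{k}{n}=\frac{r^{s+1}}{r^{s+1}+2\sum_{i=0}^{s}r^i}$ for $t$ even and $\frac{k}{n}=\frac{r^{s+1}}{r^{s+1}+2\sum_{i=1}^{s}r^i+1}$ for $t$ odd, where $s=\lfloor(t-1)/2\rfloor$, if and only if $G$ is a Moore graph.
   Context: For integers $r\ge1$, $t\ge2$ define $N_{r,t}=1+\sum_{i=0}^{s}(r+1)r^i$ if $t=2s+2$ is even and $N_{r,t}=2\sum_{i=0}^{s}r^i$ if $t=2s+1$ is odd. A Moore graph (for $r,t$) is an $(r+1)$-regular graph of girth at least $t+1$ with exactly $N_{r,t}$ vertices. An $(n,k,r,t)_{\mathrm{seq}}$ code is an $[n,k]$ linear code $\mathcal{C}\subseteq\mathbb{F}_q^n$ such that for every $E\subseteq[n]$ with $1\le|E|=u\le t$ there is an ordering $\ell_1,\dots,\ell_u$ of $E$ and sets $R_j\subseteq[n]$, $|R_j|\le r$, $R_j\cap\{\ell_j,\dots,\ell_u\}=\emptyset$, with coefficients $a_{j,i}$ such that $c_{\ell_j}=\sum_{i\in R_j}a_{j,i}c_i$ for all $c\in\mathcal{C}$. *)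

theory Defs
  imports Complex_Main "HOL-Library.Z2" "HOL-Library.Function_Algebras"
begin

text \<open>Simple graphs: a finite vertex set V and a symmetric, irreflexive adjacency
relation E (only its restriction to V matters).\<close>

definition simple_graph :: "'a set \<Rightarrow> ('a \<Rightarrow> 'a \<Rightarrow> bool) \<Rightarrow> bool" where
  "simple_graph V E \<longleftrightarrow> finite V \<and> (\<forall>u\<in>V. \<forall>v\<in>V. E u v \<longleftrightarrow> E v u) \<and> (\<forall>v\<in>V. \<not> E v v)"

definition graph_edges :: "'a set \<Rightarrow> ('a \<Rightarrow> 'a \<Rightarrow> bool) \<Rightarrow> 'a set set" where
  "graph_edges V E = {{u, v} | u v. u \<in> V \<and> v \<in> V \<and> E u v}"

definition regular :: "'a set \<Rightarrow> ('a \<Rightarrow> 'a \<Rightarrow> bool) \<Rightarrow> nat \<Rightarrow> bool" where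
  "regular V E d \<longleftrightarrow> (\<forall>v\<in>V. card {w\<in>V. E v w} = d)"

definition connected_graph :: "'a set \<Rightarrow> ('a \<Rightarrow> 'a \<Rightarrow> bool) \<Rightarrow> bool" where
  "connected_graph V E \<longleftrightarrow> (\<forall>u\<in>V. \<forall>v\<in>V. (\<lambda>x y. x \<in> V \<and> y \<in> V \<and> E x y)\<^sup>*\<^sup>* u v)"

definition is_cycle :: "'a set \<Rightarrow> ('a \<Rightarrow> 'a \<Rightarrow> bool) \<Rightarrow> 'a list \<Rightarrow> bool" where
  "is_cycle V E cs \<longleftrightarrow> length cs \<ge> 3 \<and> distinct cs \<and> set cs \<subseteq> V \<and>
     (\<forall>i < length cs. E (cs ! i) (cs ! ((i + 1) mod length cs)))"

definition girth_at_least :: "'a set \<Rightarrow> ('a \<Rightarrow> 'a \<Rightarrow> bool) \<Rightarrow> nat \<Rightarrow> bool" where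
  "girth_at_least V E g \<longleftrightarrow> (\<forall>cs. is_cycle V E cs \<longrightarrow> length cs \<ge> g)"

definition moore_bound :: "nat \<Rightarrow> nat \<Rightarrow> nat" where
  "moore_bound r t =
     (if even t then 1 + (\<Sum>i=0..(t - 2) div 2. (r + 1) * r ^ i)
      else 2 * (\<Sum>i=0..(t - 1) div 2. r ^ i))"

definition moore_graph :: "'a set \<Rightarrow> ('a \<Rightarrow> 'a \<Rightarrow> bool) \<Rightarrow> nat \<Rightarrow> nat \<Rightarrow> bool" where
  "moore_graph V E r t \<longleftrightarrow> regular V E (r + 1) \<and> girth_at_least V E (t + 1) \<and> card V = moore_bound r t"

text \<open>Binary code with parity-check matrix the vertex-edge incidence matrix of the graph:
words are vectors indexed by the edges (functions vanishing off the edge set), and for every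
vertex v the sum over the edges incident to v is 0 in F_2.\<close>
definition incidence_code :: "'a set \<Rightarrow> ('a \<Rightarrow> 'a \<Rightarrow> bool) \<Rightarrow> ('a set \<Rightarrow> bit) set" where
  "incidence_code V E = {x. (\<forall>e. e \<notin> graph_edges V E \<longrightarrow> x e = 0) \<and>
      (\<forall>v\<in>V. (\<Sum>e\<in>{e\<in>graph_edges V E. v \<in> e}. x e) = 0)}"

definition dim2 :: "('a set \<Rightarrow> bit) set \<Rightarrow> nat" where
  "dim2 S = vector_space.dim (\<lambda>(c::bit) x. (\<lambda>e. c * x e)) S"

end

theory Submission
  imports Defs "HOL-Library.Indicator_Function"
begin

text \<open>The code is the cycle space of \<open>G\<close>. Fixing a root \<open>v\<^sub>0\<close>, walks from \<open>v\<^sub>0\<close> to the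
other vertices give \<open>N - 1\<close> edge vectors with boundaries \<open>\<delta>\<^sub>v\<^sub>0 + \<delta>\<^sub>v\<close>; they are independent and
span a complement of the kernel of the incidence map, because the boundary of every edge vector
has even weight. Hence \<open>k = n - N + 1\<close>, and with \<open>2n = N(r+1)\<close> the rate is
\<open>k/n = (N(r-1)+2)/(N(r+1))\<close>, an injective function of \<open>N\<close>. The rate in the statement is
this function at the Moore bound \<open>N\<^sub>r\<^sub>,\<^sub>t\<close>, so equality holds iff \<open>N = N\<^sub>r\<^sub>,\<^sub>t\<close>, i.e. iff \<open>G\<close>
is a Moore graph.\<close>

context vector_space
begin

lemma independent_Un:
  assumes A: "independent A" and B: "independent B" and AB: "span A \<inter> span B \<subseteq> {0}"
  shows "independent (A \<union> B)"
  unfolding independent_explicit_module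
proof (intro allI impI)
  fix t u v
  assume t: "finite t" "t \<subseteq> A \<union> B" and sum0: "(\<Sum>v\<in>t. u v *s v) = 0" and v: "v \<in> t"
  define a where "a = (\<Sum>v\<in>t \<inter> A. u v *s v)"
  define b where "b = (\<Sum>v\<in>t - A. u v *s v)"
  have "a + b = 0"
    unfolding a_def b_def sum.Int_Diff[OF t(1), of _ A, symmetric] by (rule sum0)
  moreover have "a \<in> span A" "b \<in> span B"
    using t(2) unfolding a_def b_def by (auto intro!: span_sum span_scale intro: span_base)
  ultimately have "a \<in> span A \<inter> span B"
    by (metis IntI add.inverse_unique minus_equation_iff span_neg)
  then have "a = 0" "b = 0"
    using AB \<open>a + b = 0\<close> by auto
  then show "u v = 0"
    using v t independentD[OF A, of "t \<inter> A" u v] independentD[OF B, of "t - A" u v]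
    by (auto simp: a_def b_def)
qed

lemma dim_add_card_complement:
  assumes C: "subspace C" "C \<subseteq> W" and W: "finite F" "W \<subseteq> span F"
    and P: "independent P" "P \<subseteq> W" "span P \<inter> C \<subseteq> {0}"
    and sums: "W \<subseteq> {c + y | c y. c \<in> C \<and> y \<in> span P}"
  shows "dim C + card P = dim W"
proof -
  obtain K where K: "K \<subseteq> C" "independent K" "C \<subseteq> span K" "card K = dim C"
    using basis_exists by blast
  have spanK: "span K = C"
    using span_subspace[OF K(1,3) C(1)] .
  have "finite K" "finite P"
    using independent_span_bound[OF W(1)] K(1,2) P(1,2) C(2) W(2) by blast+
  moreover have "K \<inter> P = {}"
  proof (rule ccontr)
    assume "K \<inter> P \<noteq> {}"
    then obtain v where "v \<in> K" "v \<in> P" by blast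
    then have "v = 0" using P(3) K(1) span_base[of v P] by blast
    then show False using \<open>v \<in> K\<close> K(2) dependent_zero by blast
  qed
  moreover have "card (K \<union> P) = dim W"
  proof (rule basis_card_eq_dim)
    show "K \<union> P \<subseteq> W" using K(1) C(2) P(2) by blast
    show "W \<subseteq> span (K \<union> P)" using sums by (auto simp: span_Un spanK)
    show "independent (K \<union> P)" using independent_Un[OF K(2) P(1)] P(3) spanK by blast
  qed
  ultimately show ?thesis using K(4) by (simp add: card_Un_disjoint)
qed

end

interpretation F2: vector_space "\<lambda>(c::bit) (x::'b \<Rightarrow> bit) i. c * x i"
  by unfold_locales (auto simp: fun_eq_iff algebra_simps)

text \<open>\<open>HOL-Library.Z2\<close> rewrites \<open>+\<close> and \<open>*\<close> on \<open>bit\<close> into \<open>XOR\<close> and \<open>AND\<close>; we reason with the field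
operations instead.\<close>
declare add_bit_eq_xor [simp del] mult_bit_eq_and [simp del]

lemma sum_apply: "(\<Sum>i\<in>A. f i) x = (\<Sum>i\<in>A. f i x)"
  by (induct A rule: infinite_finite_induct) auto

definition supported_on :: "'b set \<Rightarrow> ('b \<Rightarrow> bit) set" where
  "supported_on S = {x. \<forall>i. i \<notin> S \<longrightarrow> x i = 0}"

lemma supported_on_eq_sum_indicator:
  assumes "finite S" "x \<in> supported_on S"
  shows "x = (\<Sum>i\<in>S. (\<lambda>j. x i * indicator {i} j))"
proof
  fix j
  have "(\<Sum>i\<in>S. (\<lambda>j. x i * indicator {i} j)) j = (\<Sum>i\<in>S. if j = i then x i else 0)"
    unfolding sum_apply by (intro sum.cong) auto
  also have "\<dots> = x j"
    using assms by (auto simp: supported_on_def)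
  finally show "x j = (\<Sum>i\<in>S. (\<lambda>j. x i * indicator {i} j)) j" by simp
qed

lemma supported_on_subset_span:
  assumes "finite S"
  shows "supported_on S \<subseteq> F2.span ((\<lambda>i. indicator {i}) ` S)"
proof
  fix x assume "x \<in> supported_on S"
  then have "x = (\<Sum>i\<in>S. (\<lambda>j. x i * indicator {i} j))"
    by (rule supported_on_eq_sum_indicator[OF assms])
  also have "\<dots> \<in> F2.span ((\<lambda>i. indicator {i}) ` S)"
    by (intro F2.span_sum F2.span_scale F2.span_base) auto
  finally show "x \<in> F2.span ((\<lambda>i. indicator {i}) ` S)" .
qed

lemma inj_indicator_singleton: "inj (\<lambda>i. indicator {i} :: 'a \<Rightarrow> bit)"
  by (rule injI) (metis indicator_simps singletonD singletonI zero_neq_one)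

lemma independent_indicators: "F2.independent ((\<lambda>i. indicator {i} :: 'a \<Rightarrow> bit) ` S)"
  unfolding F2.independent_explicit_module
proof (intro allI impI)
  fix t :: "('a \<Rightarrow> bit) set" and u v
  assume t: "finite t" "t \<subseteq> (\<lambda>i. indicator {i}) ` S"
    and sum0: "(\<Sum>v\<in>t. (\<lambda>j. u v * v j)) = 0" and v: "v \<in> t"
  obtain i where i: "v = indicator {i}" using v t(2) by blast
  have coord: "w i = (if w = v then 1 else 0)" if w: "w \<in> t" for w
  proof -
    obtain j where "w = indicator {j}" using w t(2) by blast
    then show ?thesis using i inj_indicator_singleton by (cases "j = i") (auto simp: inj_def)
  qed
  have "(\<Sum>w\<in>t. (\<lambda>j. u w * w j)) i = (\<Sum>w\<in>t. if w = v then u w else 0)"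
    unfolding sum_apply by (intro sum.cong refl) (simp add: coord)
  also have "\<dots> = u v" using t(1) v by simp
  finally show "u v = 0" using sum0 by simp
qed

lemma dim_supported_on:
  assumes "finite S"
  shows "F2.dim (supported_on S) = card S"
proof -
  have "F2.dim (supported_on S) = card ((\<lambda>i. indicator {i} :: 'a \<Rightarrow> bit) ` S)"
    using supported_on_subset_span[OF assms] independent_indicators
    by (intro F2.basis_card_eq_dim[symmetric]) (auto simp: supported_on_def indicator_def)
  also have "\<dots> = card S"
    by (rule card_image[OF inj_on_subset[OF inj_indicator_singleton subset_UNIV]])
  finally show ?thesis .
qed

definition boundary :: "'a set set \<Rightarrow> ('a set \<Rightarrow> bit) \<Rightarrow> 'a \<Rightarrow> bit" where
  "boundary Ed x v = (\<Sum>e\<in>{e\<in>Ed. v \<in> e}. x e)"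

lemma incidence_code_eq:
  "incidence_code V E =
     {x \<in> supported_on (graph_edges V E). \<forall>v\<in>V. boundary (graph_edges V E) x v = 0}"
  by (auto simp: incidence_code_def supported_on_def boundary_def)

lemma boundary_add: "boundary Ed (x + y) v = boundary Ed x v + boundary Ed y v"
  by (simp add: boundary_def sum.distrib)

lemma boundary_sum:
  "finite I \<Longrightarrow> boundary Ed (\<Sum>i\<in>I. (\<lambda>e. c i * f i e)) v = (\<Sum>i\<in>I. c i * boundary Ed (f i) v)"
  unfolding boundary_def sum_apply by (simp add: sum_distrib_left) (rule sum.swap)

lemma boundary_indicator:
  assumes "finite Ed" "e \<in> Ed"
  shows "boundary Ed (indicator {e}) v = indicator e v"
  using assms by (simp add: boundary_def indicator_def sum.If_cases)

lemma subspace_incidence_code: "F2.subspace (incidence_code V E)"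
  unfolding incidence_code_eq F2.subspace_def
  by (auto simp: supported_on_def boundary_def sum.distrib sum_distrib_left[symmetric])

lemma simple_graph_finite: "simple_graph V E \<Longrightarrow> finite V"
  by (simp add: simple_graph_def)

lemma finite_graph_edges: "simple_graph V E \<Longrightarrow> finite (graph_edges V E)"
  unfolding simple_graph_def graph_edges_def
  by (rule finite_subset[of _ "Pow V"]) auto

lemma graph_edge_card:
  assumes G: "simple_graph V E" and e: "e \<in> graph_edges V E"
  shows "card e = 2" "{v\<in>V. v \<in> e} = e"
proof -
  obtain u w where uw: "e = {u, w}" "u \<in> V" "w \<in> V" "E u w"
    using e unfolding graph_edges_def by blast
  moreover have "u \<noteq> w" using G uw(2,4) unfolding simple_graph_def by blast
  ultimately show "card e = 2" "{v\<in>V. v \<in> e} = e" by auto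
qed

lemma walk_boundary:
  assumes G: "simple_graph V E" and walk: "(\<lambda>x y. x \<in> V \<and> y \<in> V \<and> E x y)\<^sup>*\<^sup>* a b"
  shows "\<exists>p\<in>supported_on (graph_edges V E).
           \<forall>w. boundary (graph_edges V E) p w = indicator {a} w + indicator {b} w"
  using walk
proof (induction rule: rtranclp_induct)
  case base
  show ?case by (intro bexI[of _ 0]) (auto simp: supported_on_def boundary_def)
next
  case (step b c)
  then obtain p where p: "p \<in> supported_on (graph_edges V E)"
    "\<And>w. boundary (graph_edges V E) p w = indicator {a} w + indicator {b} w" by blast
  have e: "{b, c} \<in> graph_edges V E" "b \<noteq> c"
    using step.hyps(2) G unfolding graph_edges_def simple_graph_def by blast+
  have "indicator {b} w + indicator {b, c} w = (indicator {c} w :: bit)" for w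
    using e(2) by (auto simp: indicator_def)
  then have "boundary (graph_edges V E) (p + indicator {{b, c}}) w = indicator {a} w + indicator {c} w" for w
    by (simp add: boundary_add p boundary_indicator[OF finite_graph_edges[OF G] e(1)] add.assoc)
  moreover have "p + indicator {{b, c}} \<in> supported_on (graph_edges V E)"
    using p(1) e by (auto simp: supported_on_def indicator_def)
  ultimately show ?case by blast
qed

lemma card_incident_edges:
  assumes G: "simple_graph V E" and v: "v \<in> V"
  shows "card {e\<in>graph_edges V E. v \<in> e} = card {w\<in>V. E v w}"
proof -
  have "{e\<in>graph_edges V E. v \<in> e} = (\<lambda>w. {v, w}) ` {w\<in>V. E v w}"
  proof
    show "(\<lambda>w. {v, w}) ` {w\<in>V. E v w} \<subseteq> {e\<in>graph_edges V E. v \<in> e}"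
      using v by (auto simp: graph_edges_def)
    show "{e\<in>graph_edges V E. v \<in> e} \<subseteq> (\<lambda>w. {v, w}) ` {w\<in>V. E v w}"
    proof
      fix e assume "e \<in> {e\<in>graph_edges V E. v \<in> e}"
      then obtain a b where ab: "e = {a, b}" "a \<in> V" "b \<in> V" "E a b" "v \<in> e"
        unfolding graph_edges_def by blast
      have "E b a" using G ab(2-4) unfolding simple_graph_def by blast
      then show "e \<in> (\<lambda>w. {v, w}) ` {w\<in>V. E v w}"
        using ab by (auto simp: insert_commute)
    qed
  qed
  moreover have "inj_on (\<lambda>w. {v, w}) {w\<in>V. E v w}"
    by (rule inj_onI) (metis doubleton_eq_iff)
  ultimately show ?thesis by (simp add: card_image)
qed

lemma handshake:
  assumes G: "simple_graph V E" and reg: "regular V E d"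
  shows "card V * d = 2 * card (graph_edges V E)"
proof -
  note finV = simple_graph_finite[OF G]
  have "card V * d = (\<Sum>v\<in>V. card {e\<in>graph_edges V E. v \<in> e})"
    using reg card_incident_edges[OF G] by (simp add: regular_def)
  also have "\<dots> = (\<Sum>e\<in>graph_edges V E. card {v\<in>V. v \<in> e})"
    using sum.swap_restrict[OF finV finite_graph_edges[OF G], of "\<lambda>_ _. 1 :: nat"] by simp
  also have "\<dots> = (\<Sum>e\<in>graph_edges V E. 2)"
    using graph_edge_card[OF G] by (intro sum.cong refl) simp
  finally show ?thesis by simp
qed

lemma sum_boundary_eq_0:
  assumes G: "simple_graph V E"
  shows "(\<Sum>v\<in>V. boundary (graph_edges V E) x v) = 0"
proof -
  note finV = simple_graph_finite[OF G]
  have "(\<Sum>v\<in>V. boundary (graph_edges V E) x v) = (\<Sum>e\<in>graph_edges V E. \<Sum>v\<in>{v\<in>V. v \<in> e}. x e)"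
    unfolding boundary_def by (rule sum.swap_restrict[OF finV finite_graph_edges[OF G]])
  also have "\<dots> = (\<Sum>e\<in>graph_edges V E. 0)"
    using graph_edge_card[OF G] by (intro sum.cong refl) simp
  finally show ?thesis by simp
qed

context
  fixes V :: "'a set" and E :: "'a \<Rightarrow> 'a \<Rightarrow> bool" and v0 :: 'a and p :: "'a \<Rightarrow> 'a set \<Rightarrow> bit"
  assumes G: "simple_graph V E" and v0: "v0 \<in> V"
    and p_supported: "\<And>v. v \<in> V \<Longrightarrow> p v \<in> supported_on (graph_edges V E)"
    and p_boundary: "\<And>v w. v \<in> V \<Longrightarrow> boundary (graph_edges V E) (p v) w = indicator {v0} w + indicator {v} w"
begin

lemma boundary_root_path_combination:
  assumes "w \<in> V"
  shows "boundary (graph_edges V E) (\<Sum>v\<in>V - {v0}. (\<lambda>e. c v * p v e)) w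
           = (if w = v0 then (\<Sum>v\<in>V - {v0}. c v) else c w)"
proof -
  note finV = simple_graph_finite[OF G]
  have "boundary (graph_edges V E) (\<Sum>v\<in>V - {v0}. (\<lambda>e. c v * p v e)) w
      = (\<Sum>v\<in>V - {v0}. c v * (indicator {v0} w + indicator {v} w))"
    using finV by (simp add: boundary_sum p_boundary)
  also have "\<dots> = (\<Sum>v\<in>V - {v0}. if w = v0 then c v else if v = w then c v else 0)"
    by (intro sum.cong refl) (auto simp: indicator_def)
  also have "\<dots> = (if w = v0 then (\<Sum>v\<in>V - {v0}. c v) else c w)"
    using assms finV by simp
  finally show ?thesis .
qed

lemma inj_on_root_paths: "inj_on p (V - {v0})"
proof (rule inj_onI)
  fix a b assume ab: "a \<in> V - {v0}" "b \<in> V - {v0}" "p a = p b"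
  have "boundary (graph_edges V E) (p a) a = 1" "boundary (graph_edges V E) (p b) a = indicator {b} a"
    using ab(1,2) by (auto simp: p_boundary indicator_def)
  then show "a = b" using ab(3) by (auto simp: indicator_def split: if_splits)
qed

lemma sum_root_paths_reindex:
  "(\<Sum>x\<in>p ` (V - {v0}). (\<lambda>e. u x * x e)) = (\<Sum>v\<in>V - {v0}. (\<lambda>e. u (p v) * p v e))"
  by (rule sum.reindex[OF inj_on_root_paths, unfolded comp_def])

lemma independent_root_paths: "F2.independent (p ` (V - {v0}))"
proof
  note finV = simple_graph_finite[OF G]
  assume "F2.dependent (p ` (V - {v0}))"
  then obtain u where u: "\<exists>x\<in>p ` (V - {v0}). u x \<noteq> 0" "(\<Sum>x\<in>p ` (V - {v0}). (\<lambda>e. u x * x e)) = 0"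
    using F2.dependent_finite[of "p ` (V - {v0})"] finV by auto
  then obtain w where w: "w \<in> V - {v0}" "u (p w) \<noteq> 0" by blast
  have "u (p w) = boundary (graph_edges V E) (\<Sum>x\<in>p ` (V - {v0}). (\<lambda>e. u x * x e)) w"
    using w(1) by (simp add: sum_root_paths_reindex boundary_root_path_combination)
  then show False using u(2) w(2) by (simp add: boundary_def)
qed

lemma span_root_paths_Int_incidence_code: "F2.span (p ` (V - {v0})) \<inter> incidence_code V E \<subseteq> {0}"
proof
  note finV = simple_graph_finite[OF G]
  fix x assume x: "x \<in> F2.span (p ` (V - {v0})) \<inter> incidence_code V E"
  then obtain u where xu: "x = (\<Sum>v\<in>V - {v0}. (\<lambda>e. u (p v) * p v e))"
    using F2.span_finite[of "p ` (V - {v0})"] finV by (auto simp: sum_root_paths_reindex)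
  have "u (p w) = 0" if "w \<in> V - {v0}" for w
    using x that boundary_root_path_combination[of w "u \<circ> p"]
    by (auto simp: xu incidence_code_eq)
  then show "x \<in> {0}" by (simp add: xu fun_eq_iff sum_apply)
qed

lemma supported_on_subset_code_plus_span_root_paths:
  "supported_on (graph_edges V E) \<subseteq> {c + y | c y. c \<in> incidence_code V E \<and> y \<in> F2.span (p ` (V - {v0}))}"
proof
  note finV = simple_graph_finite[OF G]
  fix x assume x: "x \<in> supported_on (graph_edges V E)"
  define y where "y = (\<Sum>v\<in>V - {v0}. (\<lambda>e. boundary (graph_edges V E) x v * p v e))"
  have "y \<in> F2.span (p ` (V - {v0}))"
    unfolding y_def by (intro F2.span_sum F2.span_scale F2.span_base) auto
  moreover have "x + y \<in> incidence_code V E"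
    unfolding incidence_code_eq
  proof (intro CollectI conjI ballI)
    have "y \<in> supported_on (graph_edges V E)"
      using p_supported by (auto simp: y_def supported_on_def sum_apply)
    then show "x + y \<in> supported_on (graph_edges V E)"
      using x by (auto simp: supported_on_def)
    fix w assume w: "w \<in> V"
    show "boundary (graph_edges V E) (x + y) w = 0"
    proof (cases "w = v0")
      case True
      \<comment> \<open>at the root, \<open>x + y\<close> has the total boundary of \<open>x\<close>, which has even weight\<close>
      have "boundary (graph_edges V E) y v0 = (\<Sum>v\<in>V - {v0}. boundary (graph_edges V E) x v)"
        using v0 by (simp add: y_def boundary_root_path_combination)
      then have "boundary (graph_edges V E) (x + y) v0 = (\<Sum>v\<in>V. boundary (graph_edges V E) x v)"
        using finV v0 by (simp add: boundary_add sum.remove)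
      then show ?thesis using True sum_boundary_eq_0[OF G] by simp
    next
      case False
      then show ?thesis
        using w boundary_root_path_combination[of w] by (simp add: y_def boundary_add)
    qed
  qed
  moreover have "x = (x + y) + y" by (simp add: fun_eq_iff)
  ultimately show "x \<in> {c + y | c y. c \<in> incidence_code V E \<and> y \<in> F2.span (p ` (V - {v0}))}"
    by blast
qed

lemma dim_incidence_code_rooted:
  "F2.dim (incidence_code V E) + (card V - 1) = card (graph_edges V E)"
proof -
  note finV = simple_graph_finite[OF G]
  have "F2.dim (incidence_code V E) + card (p ` (V - {v0})) = F2.dim (supported_on (graph_edges V E))"
  proof (rule F2.dim_add_card_complement[OF subspace_incidence_code _ finite_imageI supported_on_subset_span])
    show "incidence_code V E \<subseteq> supported_on (graph_edges V E)"
      by (auto simp: incidence_code_eq)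
  qed (use finite_graph_edges[OF G] independent_root_paths p_supported
           span_root_paths_Int_incidence_code supported_on_subset_code_plus_span_root_paths in auto)
  then show ?thesis
    using dim_supported_on[OF finite_graph_edges[OF G]] card_image[OF inj_on_root_paths] finV v0
    by simp
qed

end

lemma dim_incidence_code:
  assumes G: "simple_graph V E" and conn: "connected_graph V E" and "V \<noteq> {}"
  shows "F2.dim (incidence_code V E) + (card V - 1) = card (graph_edges V E)"
proof -
  obtain v0 where v0: "v0 \<in> V" using \<open>V \<noteq> {}\<close> by blast
  have "\<forall>v\<in>V. \<exists>q\<in>supported_on (graph_edges V E).
          \<forall>w. boundary (graph_edges V E) q w = indicator {v0} w + indicator {v} w"
    using walk_boundary[OF G] conn v0 unfolding connected_graph_def by blast
  then obtain p where "\<And>v. v \<in> V \<Longrightarrow> p v \<in> supported_on (graph_edges V E)"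
    "\<And>v w. v \<in> V \<Longrightarrow> boundary (graph_edges V E) (p v) w = indicator {v0} w + indicator {v} w"
    by metis
  then show ?thesis using dim_incidence_code_rooted[OF G v0] by blast
qed

definition cycle_code_rate :: "nat \<Rightarrow> real \<Rightarrow> real" where
  "cycle_code_rate r N = (N * (real r - 1) + 2) / (N * (real r + 1))"

lemma rate_incidence_code:
  assumes G: "simple_graph V E" and "connected_graph V E" and "regular V E (r + 1)" and "V \<noteq> {}"
  shows "real (dim2 (incidence_code V E)) / real (card (graph_edges V E)) = cycle_code_rate r (card V)"
proof -
  have "card V \<ge> 1"
    using simple_graph_finite[OF G] \<open>V \<noteq> {}\<close> by (simp add: Suc_le_eq card_gt_0_iff)
  then have kn: "real (dim2 (incidence_code V E)) + (real (card V) - 1) = real (card (graph_edges V E))"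
    using dim_incidence_code[OF assms(1,2,4)] unfolding dim2_def by (metis of_nat_1 of_nat_add of_nat_diff)
  have n: "2 * real (card (graph_edges V E)) = real (card V) * (real r + 1)"
    using arg_cong[OF handshake[OF G assms(3)], of real] by (simp add: algebra_simps)
  then have k: "2 * real (dim2 (incidence_code V E)) = real (card V) * (real r - 1) + 2"
    using kn by (simp add: algebra_simps)
  show ?thesis
    unfolding cycle_code_rate_def k[symmetric] n[symmetric] by simp
qed

lemma cycle_code_rate_inj:
  assumes "x \<noteq> 0" "y \<noteq> 0" "cycle_code_rate r x = cycle_code_rate r y"
  shows "x = y"
proof -
  have "(x * (real r - 1) + 2) * (y * (real r + 1)) = (y * (real r - 1) + 2) * (x * (real r + 1))"
    using assms by (simp add: cycle_code_rate_def frac_eq_eq)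
  then have "2 * (real r + 1) * y = 2 * (real r + 1) * x"
    by (simp add: algebra_simps)
  then show ?thesis by simp
qed

lemma cycle_code_rate_pos: "r \<ge> 1 \<Longrightarrow> x > 0 \<Longrightarrow> cycle_code_rate r x > 0"
  unfolding cycle_code_rate_def by (intro divide_pos_pos add_nonneg_pos) auto

lemma moore_bound_pos: "moore_bound r t > 0"
  by (simp add: moore_bound_def sum.atLeast_Suc_atMost[of 0])

lemma geometric_sum_real: "(x - 1) * (\<Sum>i=0..s. (x::real) ^ i) = x ^ (s + 1) - 1"
  by (induction s) (auto simp: algebra_simps)

lemma moore_rate_eq_cycle_code_rate:
  fixes r t :: nat
  defines "s \<equiv> (t - 1) div 2"
  shows "(if even t then real r ^ (s + 1) / (real r ^ (s + 1) + 2 * (\<Sum>i=0..s. real r ^ i))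
          else real r ^ (s + 1) / (real r ^ (s + 1) + 2 * (\<Sum>i=1..s. real r ^ i) + 1))
       = cycle_code_rate r (moore_bound r t)"
proof -
  define S where "S = (\<Sum>i=0..s. real r ^ i)"
  define T where "T = (\<Sum>i=1..s. real r ^ i)"
  have geom: "(real r - 1) * S = real r ^ (s + 1) - 1"
    unfolding S_def by (rule geometric_sum_real)
  have ST: "S = 1 + T"
    unfolding S_def T_def by (simp add: sum.atLeast_Suc_atMost[of 0])
  have "T \<ge> 0" unfolding T_def by (intro sum_nonneg) auto
  show ?thesis
  proof (cases "even t")
    case True
    then have "(t - 2) div 2 = s" unfolding s_def by presburger
    then have "real (moore_bound r t) = 1 + (real r + 1) * S"
      using True unfolding moore_bound_def S_def by (simp add: of_nat_sum sum_distrib_left algebra_simps)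
    then have M: "real (moore_bound r t) = real r ^ (s + 1) + 2 * S"
      using geom by (simp add: algebra_simps)
    have "real (moore_bound r t) * (real r - 1) + 2 = (real r + 1) * real r ^ (s + 1)"
      using geom by (simp add: M algebra_simps)
    then show ?thesis
      using True \<open>T \<ge> 0\<close> ST by (simp add: cycle_code_rate_def M S_def)
  next
    case False
    then have M: "real (moore_bound r t) = 2 * S"
      by (simp add: moore_bound_def S_def s_def of_nat_sum)
    have num: "real (moore_bound r t) * (real r - 1) + 2 = 2 * real r ^ (s + 1)"
      using geom by (simp add: M algebra_simps)
    have den: "real (moore_bound r t) * (real r + 1) = 2 * (real r ^ (s + 1) + 2 * T + 1)"
      using geom ST by (simp add: M algebra_simps)
    have "cycle_code_rate r (moore_bound r t) = real r ^ (s + 1) / (real r ^ (s + 1) + 2 * T + 1)"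
      unfolding cycle_code_rate_def num den by (rule mult_divide_mult_cancel_left) simp
    then show ?thesis
      using False by (simp add: T_def)
  qed
qed

theorem mainTheorem8:
  fixes V :: "'a set" and E :: "'a \<Rightarrow> 'a \<Rightarrow> bool" and r t :: nat
  assumes "r \<ge> 3" and "t \<ge> 2"
    and "simple_graph V E" and "connected_graph V E"
    and "regular V E (r + 1)" and "girth_at_least V E (t + 1)"
  shows "(let n = card (graph_edges V E); k = dim2 (incidence_code V E);
              s = (t - 1) div 2 in
          real k / real n =
            (if even t then real r ^ (s + 1) / (real r ^ (s + 1) + 2 * (\<Sum>i=0..s. real r ^ i))
             else real r ^ (s + 1) / (real r ^ (s + 1) + 2 * (\<Sum>i=1..s. real r ^ i) + 1)))
         \<longleftrightarrow> moore_graph V E r t"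
proof -
  have "real (dim2 (incidence_code V E)) / real (card (graph_edges V E))
          = cycle_code_rate r (moore_bound r t) \<longleftrightarrow> card V = moore_bound r t"
  proof (cases "V = {}")
    case True
    then have "graph_edges V E = {}" by (simp add: graph_edges_def)
    then show ?thesis
      using True moore_bound_pos cycle_code_rate_pos[of r "moore_bound r t"] assms(1) by simp
  next
    case False
    then have "card V > 0" using simple_graph_finite[OF assms(3)] by (simp add: card_gt_0_iff)
    then show ?thesis
      using rate_incidence_code[OF assms(3,4,5) False] moore_bound_pos
        cycle_code_rate_inj[of "card V" "moore_bound r t" r] by auto
  qed
  then show ?thesis
    using assms(5,6) unfolding Let_def moore_rate_eq_cycle_code_rate by (simp add: moore_graph_def)
qed

end
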